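(* Let $\mathcal C'\subseteq\{0,1\}^n$ be a neural code, $c\in\{0,1\}^n$, and $CF(J_{\mathcal C'})=\{f_1,\dots,f_r\}$. Let $M=\{f\in CF(J_{\mathcal C'}) : f(c)=0\}$ and $N=CF(J_{\mathcal C'})\setminus M$. Let $L$ be the set of all products $g=f\cdot(x_i-c_i)$ with $f\in N$ and $i\in[n]$ such that (a) the polynomial $x_i-c_i-1$ does not divide $f$, and (b) $g$ is not a multiple (in $\mathbb F_2[x_1,\dots,x_n]$) of any element of $M$. Then $CF(J_{\mathcal C'\cup\{c\}})=M\cup L$.
   Context: All polynomials lie in $\mathbb F_2[x_1,\dots,x_n]$ (so $x_i-c_i$ is $x_i$ if $c_i=0$ and $1-x_i$ if $c_i=1$). A pseudo-monomial is a polynomial $\prod_{i\in\sigma}x_i\prod_{j\in\tau}(1-x_j)$ with $\sigma\cap\tau=\emptyset$. For $v\in\{0,1\}^n$ let $\rho_v=\prod_{v_i=1}x_i\prod_{v_j=0}(1-x_j)$. For a code $\mathcal C\subseteq\{0,1\}^n$, the neural ideal is $J_\mathcal C=\langle\rho_v : v\in\{0,1\}^n\setminus\mathcal C\rangle$. A pseudo-monomial $f\in J_\mathcal C$ is minimal if there is no pseudo-monomial $g\in J_\mathcal C$ of smaller degree with $f=gh$ for some polynomial $h$; the canonical form $CF(J_\mathcal C)$ is the set of all minimal pseudo-monomials in $J_\mathcal C$. *)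

theory Defs
  imports "HOL-Library.Poly_Mapping" "HOL-Library.Z2"
begin

(* F_2[x_1,...,x_n] is the subring of polynomials using only variables with index < n
   (variable x_(i+1) of the paper is Var i here). *)
type_synonym poly = "(nat \<Rightarrow>\<^sub>0 nat) \<Rightarrow>\<^sub>0 bit"

definition Var :: "nat \<Rightarrow> poly" where
  "Var i = Poly_Mapping.single (Poly_Mapping.single i 1) 1"

definition in_ring :: "nat \<Rightarrow> poly \<Rightarrow> bool" where
  "in_ring n p \<longleftrightarrow> (\<forall>m\<in>Poly_Mapping.keys p. Poly_Mapping.keys m \<subseteq> {..<n})"

definition pdvd :: "nat \<Rightarrow> poly \<Rightarrow> poly \<Rightarrow> bool" where
  "pdvd n f g \<longleftrightarrow> (\<exists>h. in_ring n h \<and> g = f * h)"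

definition total_degree :: "poly \<Rightarrow> nat" where
  "total_degree p = Max (insert 0 ((\<lambda>m. sum (Poly_Mapping.lookup m) (Poly_Mapping.keys m)) ` Poly_Mapping.keys p))"

definition pseudo_monomial :: "nat \<Rightarrow> poly \<Rightarrow> bool" where
  "pseudo_monomial n f \<longleftrightarrow> (\<exists>\<sigma> \<tau>. \<sigma> \<subseteq> {..<n} \<and> \<tau> \<subseteq> {..<n} \<and> \<sigma> \<inter> \<tau> = {} \<and>
      f = (\<Prod>i\<in>\<sigma>. Var i) * (\<Prod>j\<in>\<tau>. 1 - Var j))"

definition words :: "nat \<Rightarrow> bool list set" where
  "words n = {v. length v = n}"

definition rho :: "bool list \<Rightarrow> poly" where
  "rho v = (\<Prod>i\<in>{i. i < length v \<and> v ! i}. Var i) * (\<Prod>j\<in>{j. j < length v \<and> \<not> v ! j}. 1 - Var j)"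

definition ideal_gen :: "nat \<Rightarrow> poly set \<Rightarrow> poly set" where
  "ideal_gen n G = {p. \<exists>h. (\<forall>g\<in>G. in_ring n (h g)) \<and> p = (\<Sum>g\<in>G. h g * g)}"

definition neural_ideal :: "nat \<Rightarrow> bool list set \<Rightarrow> poly set" where
  "neural_ideal n C = ideal_gen n (rho ` (words n - C))"

definition minimal_pm :: "nat \<Rightarrow> poly set \<Rightarrow> poly \<Rightarrow> bool" where
  "minimal_pm n J f \<longleftrightarrow> pseudo_monomial n f \<and> f \<in> J \<and>
     \<not> (\<exists>g h. pseudo_monomial n g \<and> g \<in> J \<and> in_ring n h \<and>
            total_degree g < total_degree f \<and> f = g * h)"

definition CF :: "nat \<Rightarrow> poly set \<Rightarrow> poly set" where
  "CF n J = {f. minimal_pm n J f}"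

definition eval :: "poly \<Rightarrow> bool list \<Rightarrow> bit" where
  "eval p v = (\<Sum>m\<in>Poly_Mapping.keys p. Poly_Mapping.lookup p m * (\<Prod>i\<in>Poly_Mapping.keys m. (of_bool (v ! i)) ^ (Poly_Mapping.lookup m i)))"

definition lin :: "nat \<Rightarrow> bool \<Rightarrow> poly" where
  "lin i b = Var i - (if b then 1 else 0)"

end

theory Submission
  imports Defs
begin

text \<open>
  Over \<open>\<bbbF>\<^sub>2\<close> a pseudo-monomial \<open>x\<^sub>\<sigma>(1 - x)\<^sub>\<tau>\<close> evaluates to 1 exactly on the cube of words
  that are 1 on \<open>\<sigma>\<close> and 0 on \<open>\<tau>\<close>. Hence it lies in \<open>J\<^sub>C\<close> iff its cube misses \<open>C\<close>, one
  pseudo-monomial divides another iff the index sets are contained in each other, and its degree is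
  \<open>|\<sigma>| + |\<tau>|\<close>; so \<open>CF(J\<^sub>C)\<close> consists of the pseudo-monomials whose index pair is minimal among
  those with cube disjoint from \<open>C\<close>. Adding the codeword \<open>c\<close> keeps a minimal pair whose cube avoids
  \<open>c\<close>; a minimal pair whose cube contains \<open>c\<close> must be enlarged by one literal that vanishes at \<open>c\<close>,
  i.e. multiplied by some \<open>x\<^sub>i - c\<^sub>i\<close>, and the product is minimal for \<open>C' \<union> {c}\<close> exactly when it
  is not a multiple of a minimal pair already avoiding \<open>c\<close>.
\<close>

(* Keep the arithmetic of bit as field arithmetic instead of rewriting it to xor/and. *)
declare add_bit_eq_xor[simp del] mult_bit_eq_and[simp del]

section \<open>Arithmetic in characteristic two\<close>

lemma bit_add_self [simp]: "(x::bit) + x = 0"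
  by (cases x) simp_all

lemma poly_uminus [simp]: "- (p::poly) = p"
  by (rule poly_mapping_eqI) simp

lemma poly_diff_eq_add: "(p::poly) - q = p + q"
  by (metis diff_conv_add_uminus poly_uminus)

lemma poly_add_self [simp]: "(p::poly) + p = 0"
  by (rule poly_mapping_eqI) (simp only: lookup_add bit_add_self lookup_zero)

lemma poly_two [simp]: "(2::poly) = 0"
  by (metis one_add_one poly_add_self)

lemma in_ring_add: "in_ring n p \<Longrightarrow> in_ring n q \<Longrightarrow> in_ring n (p + q)"
  unfolding in_ring_def by (meson UnE keys_add subsetD)

lemma in_ring_diff: "in_ring n p \<Longrightarrow> in_ring n q \<Longrightarrow> in_ring n (p - q)"
  by (simp only: poly_diff_eq_add in_ring_add)

lemma in_ring_mult:
  assumes "in_ring n p" "in_ring n q"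
  shows "in_ring n (p * q)"
  unfolding in_ring_def
proof
  fix m assume "m \<in> Poly_Mapping.keys (p * q)"
  then obtain a b where "a \<in> Poly_Mapping.keys p" "b \<in> Poly_Mapping.keys q" "m = a + b"
    using keys_mult[of p q] by blast
  then show "Poly_Mapping.keys m \<subseteq> {..<n}"
    using assms keys_add[of a b] unfolding in_ring_def by blast
qed

lemma in_ring_zero [simp]: "in_ring n 0"
  by (simp add: in_ring_def)

lemma in_ring_one [simp]: "in_ring n 1"
  by (simp add: in_ring_def)

lemma in_ring_Var: "i < n \<Longrightarrow> in_ring n (Var i)"
  by (simp add: in_ring_def Var_def)

lemma in_ring_prod:
  "finite A \<Longrightarrow> (\<And>a. a \<in> A \<Longrightarrow> in_ring n (f a)) \<Longrightarrow> in_ring n (\<Prod>a\<in>A. f a)"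
  by (induction A rule: finite_induct) (auto intro: in_ring_mult)

section \<open>Evaluation at a word\<close>

definition eval_monomial :: "bool list \<Rightarrow> (nat \<Rightarrow>\<^sub>0 nat) \<Rightarrow> bit" where
  "eval_monomial v m = (\<Prod>i\<in>Poly_Mapping.keys m. of_bool (v ! i) ^ Poly_Mapping.lookup m i)"

lemma eval_eq_sum_monomials:
  "eval p v = (\<Sum>m\<in>Poly_Mapping.keys p. Poly_Mapping.lookup p m * eval_monomial v m)"
  by (simp add: eval_def eval_monomial_def)

lemma eval_monomial_superset:
  "finite S \<Longrightarrow> Poly_Mapping.keys m \<subseteq> S \<Longrightarrow>
   eval_monomial v m = (\<Prod>i\<in>S. of_bool (v ! i) ^ Poly_Mapping.lookup m i)"
  unfolding eval_monomial_def by (rule prod.mono_neutral_left) (auto simp: in_keys_iff)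

lemma eval_monomial_add: "eval_monomial v (a + b) = eval_monomial v a * eval_monomial v b"
proof -
  let ?S = "Poly_Mapping.keys a \<union> Poly_Mapping.keys b"
  have "eval_monomial v (a + b) = (\<Prod>i\<in>?S. of_bool (v ! i) ^ Poly_Mapping.lookup (a + b) i)"
    by (rule eval_monomial_superset) (auto simp: keys_add)
  also have "\<dots> = (\<Prod>i\<in>?S. of_bool (v ! i) ^ Poly_Mapping.lookup a i *
                            of_bool (v ! i) ^ Poly_Mapping.lookup b i)"
    by (simp add: lookup_add power_add del: power_bit_unfold)
  also have "\<dots> = eval_monomial v a * eval_monomial v b"
    by (simp add: prod.distrib eval_monomial_superset[of ?S])
  finally show ?thesis .
qed

lemma eval_superset:
  "finite S \<Longrightarrow> Poly_Mapping.keys p \<subseteq> S \<Longrightarrow>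
   eval p v = (\<Sum>m\<in>S. Poly_Mapping.lookup p m * eval_monomial v m)"
  unfolding eval_eq_sum_monomials by (rule sum.mono_neutral_left) (auto simp: in_keys_iff)

lemma eval_add: "eval (p + q) v = eval p v + eval q v"
proof -
  let ?S = "Poly_Mapping.keys p \<union> Poly_Mapping.keys q"
  have "eval (p + q) v = (\<Sum>m\<in>?S. Poly_Mapping.lookup (p + q) m * eval_monomial v m)"
    by (rule eval_superset) (auto simp: keys_add)
  also have "\<dots> = eval p v + eval q v"
    by (simp add: lookup_add distrib_right sum.distrib eval_superset[of ?S])
  finally show ?thesis .
qed

lemma eval_zero [simp]: "eval 0 v = 0"
  by (simp add: eval_def)

lemma eval_one [simp]: "eval 1 v = 1"
  by (simp add: eval_eq_sum_monomials eval_monomial_def)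

lemma eval_single: "eval (Poly_Mapping.single m a) v = a * eval_monomial v m"
  by (simp add: eval_eq_sum_monomials)

lemma update_eq_add_single:
  "a \<notin> Poly_Mapping.keys f \<Longrightarrow> Poly_Mapping.update a b f = f + Poly_Mapping.single a b"
  by (rule poly_mapping_eqI) (auto simp: lookup_update lookup_add lookup_single in_keys_iff when_def)

lemma eval_mult_single:
  "eval (Poly_Mapping.single a b * q) v = eval (Poly_Mapping.single a b) v * eval q v"
proof (induction q rule: update_induct)
  case const
  then show ?case by simp
next
  case (update f a' b')
  then show ?case
    by (simp add: update_eq_add_single eval_add mult_single eval_single
        eval_monomial_add algebra_simps)
qed

lemma eval_mult: "eval (p * q) v = eval p v * eval q v"
proof (induction p rule: update_induct)
  case const
  then show ?case by simp
next
  case (update f a b)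
  then show ?case
    by (simp add: update_eq_add_single distrib_right eval_add eval_mult_single)
qed

lemma eval_diff: "eval (p - q) v = eval p v - eval q v"
  by (simp add: poly_diff_eq_add eval_add)

lemma eval_Var: "eval (Var i) v = of_bool (v ! i)"
  by (simp add: Var_def eval_single eval_monomial_def)

lemma eval_prod: "finite A \<Longrightarrow> eval (\<Prod>a\<in>A. f a) v = (\<Prod>a\<in>A. eval (f a) v)"
  by (induction A rule: finite_induct) (auto simp: eval_mult)

lemma eval_sum: "finite A \<Longrightarrow> eval (\<Sum>a\<in>A. f a) v = (\<Sum>a\<in>A. eval (f a) v)"
  by (induction A rule: finite_induct) (auto simp: eval_add)


section \<open>Pseudo-monomials and their cubes\<close>

definition pmon :: "nat set \<Rightarrow> nat set \<Rightarrow> poly" where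
  "pmon \<sigma> \<tau> = (\<Prod>i\<in>\<sigma>. Var i) * (\<Prod>j\<in>\<tau>. 1 - Var j)"

definition valid_pair :: "nat \<Rightarrow> nat set \<Rightarrow> nat set \<Rightarrow> bool" where
  "valid_pair n \<sigma> \<tau> \<longleftrightarrow> \<sigma> \<subseteq> {..<n} \<and> \<tau> \<subseteq> {..<n} \<and> \<sigma> \<inter> \<tau> = {}"

definition cube :: "nat \<Rightarrow> nat set \<Rightarrow> nat set \<Rightarrow> bool list set" where
  "cube n \<sigma> \<tau> = {v \<in> words n. (\<forall>i\<in>\<sigma>. v ! i) \<and> (\<forall>j\<in>\<tau>. \<not> v ! j)}"

lemma valid_pair_finite: "valid_pair n \<sigma> \<tau> \<Longrightarrow> finite \<sigma> \<and> finite \<tau>"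
  unfolding valid_pair_def using finite_subset by blast

lemma valid_pair_subset: "valid_pair n \<sigma> \<tau> \<Longrightarrow> \<sigma>' \<subseteq> \<sigma> \<Longrightarrow> \<tau>' \<subseteq> \<tau> \<Longrightarrow> valid_pair n \<sigma>' \<tau>'"
  unfolding valid_pair_def by blast

lemma pseudo_monomial_iff_pmon:
  "pseudo_monomial n f \<longleftrightarrow> (\<exists>\<sigma> \<tau>. valid_pair n \<sigma> \<tau> \<and> f = pmon \<sigma> \<tau>)"
  unfolding pseudo_monomial_def valid_pair_def pmon_def by simp

lemma rho_eq_pmon: "rho w = pmon {i. i < length w \<and> w ! i} {j. j < length w \<and> \<not> w ! j}"
  by (simp add: rho_def pmon_def)

lemma in_ring_pmon: "valid_pair n \<sigma> \<tau> \<Longrightarrow> in_ring n (pmon \<sigma> \<tau>)"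
  unfolding pmon_def valid_pair_def
  by (intro in_ring_mult in_ring_prod in_ring_diff in_ring_one in_ring_Var)
     (auto intro: finite_subset)

lemma cube_antimono: "\<sigma>' \<subseteq> \<sigma> \<Longrightarrow> \<tau>' \<subseteq> \<tau> \<Longrightarrow> cube n \<sigma> \<tau> \<subseteq> cube n \<sigma>' \<tau>'"
  unfolding cube_def by blast

lemma words_finite: "finite (words n)"
  using finite_lists_length_eq[of "UNIV :: bool set" n] by (simp add: words_def)

lemma word_exists: "\<exists>v\<in>words n. \<forall>i<n. v ! i = P i"
  by (rule bexI[of _ "map P [0..<n]"]) (auto simp: words_def)

lemma cube_subset_imp_subset:
  assumes "valid_pair n \<sigma> \<tau>" "valid_pair n \<sigma>' \<tau>'" "cube n \<sigma> \<tau> \<subseteq> cube n \<sigma>' \<tau>'"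
  shows "\<sigma>' \<subseteq> \<sigma> \<and> \<tau>' \<subseteq> \<tau>"
proof -
  obtain v1 where v1: "v1 \<in> words n" "\<forall>i<n. v1 ! i = (i \<in> \<sigma>)"
    using word_exists[of n "\<lambda>i. i \<in> \<sigma>"] by blast
  obtain v0 where v0: "v0 \<in> words n" "\<forall>i<n. v0 ! i = (i \<notin> \<tau>)"
    using word_exists[of n "\<lambda>i. i \<notin> \<tau>"] by blast
  have "v1 \<in> cube n \<sigma> \<tau>" "v0 \<in> cube n \<sigma> \<tau>"
    using assms(1) v1 v0 unfolding valid_pair_def cube_def by auto
  then have "v1 \<in> cube n \<sigma>' \<tau>'" "v0 \<in> cube n \<sigma>' \<tau>'"
    using assms(3) by auto
  then show ?thesis
    using assms(2) v1 v0 unfolding valid_pair_def cube_def by auto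
qed

lemma prod_of_bool_bit: "finite A \<Longrightarrow> (\<Prod>a\<in>A. (of_bool (P a) :: bit)) = of_bool (\<forall>a\<in>A. P a)"
  by (induction A rule: finite_induct) auto

lemma one_minus_of_bool: "1 - (of_bool b :: bit) = of_bool (\<not> b)"
  by (cases b) simp_all

lemma eval_pmon:
  "finite \<sigma> \<Longrightarrow> finite \<tau> \<Longrightarrow>
   eval (pmon \<sigma> \<tau>) v = of_bool ((\<forall>i\<in>\<sigma>. v ! i) \<and> (\<forall>j\<in>\<tau>. \<not> v ! j))"
  by (simp add: pmon_def eval_mult eval_prod eval_Var eval_diff one_minus_of_bool prod_of_bool_bit)

lemma eval_pmon_word:
  "valid_pair n \<sigma> \<tau> \<Longrightarrow> v \<in> words n \<Longrightarrow> eval (pmon \<sigma> \<tau>) v = of_bool (v \<in> cube n \<sigma> \<tau>)"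
  using valid_pair_finite[of n \<sigma> \<tau>] by (simp add: eval_pmon cube_def)

lemma eval_rho: "eval (rho w) v = of_bool (\<forall>i<length w. v ! i = w ! i)"
  unfolding rho_eq_pmon by (subst eval_pmon) auto

lemma eval_rho_other:
  assumes "w \<in> words n" "v \<in> words n" "w \<noteq> v"
  shows "eval (rho w) v = 0"
proof -
  have "\<not> (\<forall>i<length w. v ! i = w ! i)"
    using assms by (simp add: words_def list_eq_iff_nth_eq) metis
  then show ?thesis by (simp add: eval_rho)
qed


section \<open>The degree of a pseudo-monomial\<close>

definition sqfree_exp :: "nat set \<Rightarrow> (nat \<Rightarrow>\<^sub>0 nat)" where
  "sqfree_exp A = (\<Sum>i\<in>A. Poly_Mapping.single i 1)"

definition sqfree_mon :: "nat set \<Rightarrow> poly" where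
  "sqfree_mon A = Poly_Mapping.single (sqfree_exp A) 1"

lemma lookup_sqfree_exp: "finite A \<Longrightarrow> Poly_Mapping.lookup (sqfree_exp A) i = of_bool (i \<in> A)"
  unfolding sqfree_exp_def by (simp add: lookup_sum lookup_single when_def)

lemma keys_sqfree_exp: "finite A \<Longrightarrow> Poly_Mapping.keys (sqfree_exp A) = A"
  by (auto simp: in_keys_iff lookup_sqfree_exp)

lemma degree_sqfree_exp:
  "finite A \<Longrightarrow> sum (Poly_Mapping.lookup (sqfree_exp A)) (Poly_Mapping.keys (sqfree_exp A)) = card A"
  by (simp add: keys_sqfree_exp lookup_sqfree_exp)

lemma sqfree_mon_mult:
  "finite A \<Longrightarrow> finite B \<Longrightarrow> A \<inter> B = {} \<Longrightarrow> sqfree_mon A * sqfree_mon B = sqfree_mon (A \<union> B)"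
  unfolding sqfree_mon_def sqfree_exp_def by (simp add: mult_single sum.union_disjoint)

lemma prod_Var_eq_sqfree_mon: "finite A \<Longrightarrow> prod Var A = sqfree_mon A"
proof (induction A rule: finite_induct)
  case empty
  then show ?case by (simp add: sqfree_mon_def sqfree_exp_def)
next
  case (insert a A)
  have "Var a = sqfree_mon {a}"
    by (simp add: sqfree_mon_def sqfree_exp_def Var_def)
  then show ?case
    using insert sqfree_mon_mult[of "{a}" A] by simp
qed

lemma pmon_expand:
  assumes "finite \<sigma>" "finite \<tau>" "\<sigma> \<inter> \<tau> = {}"
  shows "pmon \<sigma> \<tau> = (\<Sum>S\<in>Pow \<tau>. sqfree_mon (\<sigma> \<union> S))"
proof -
  have "(\<Prod>j\<in>\<tau>. 1 - Var j) = (\<Prod>j\<in>\<tau>. Var j + 1)"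
    by (simp add: poly_diff_eq_add add.commute)
  also have "\<dots> = (\<Sum>S\<in>Pow \<tau>. sqfree_mon S)"
    using assms(2) by (simp add: prod_add prod_Var_eq_sqfree_mon finite_subset)
  finally have "pmon \<sigma> \<tau> = (\<Sum>S\<in>Pow \<tau>. sqfree_mon \<sigma> * sqfree_mon S)"
    using assms(1) by (simp add: pmon_def prod_Var_eq_sqfree_mon sum_distrib_left)
  also have "\<dots> = (\<Sum>S\<in>Pow \<tau>. sqfree_mon (\<sigma> \<union> S))"
    using assms by (intro sum.cong refl sqfree_mon_mult) (auto intro: finite_subset)
  finally show ?thesis .
qed

text \<open>The monomials \<open>x\<^sub>\<sigma>\<^sub>\<union>\<^sub>S\<close> of the expansion are pairwise distinct, so none of them cancels.\<close>

lemma keys_pmon: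
  assumes "finite \<sigma>" "finite \<tau>" "\<sigma> \<inter> \<tau> = {}"
  shows "Poly_Mapping.keys (pmon \<sigma> \<tau>) = (\<lambda>S. sqfree_exp (\<sigma> \<union> S)) ` Pow \<tau>"
proof -
  have inj: "inj_on (\<lambda>S. sqfree_exp (\<sigma> \<union> S)) (Pow \<tau>)"
  proof (rule inj_onI)
    fix S S' assume "S \<in> Pow \<tau>" "S' \<in> Pow \<tau>" "sqfree_exp (\<sigma> \<union> S) = sqfree_exp (\<sigma> \<union> S')"
    moreover have "finite S" "finite S'"
      using \<open>S \<in> Pow \<tau>\<close> \<open>S' \<in> Pow \<tau>\<close> assms(2) by (auto intro: finite_subset)
    ultimately have "\<sigma> \<union> S = \<sigma> \<union> S'"
      using assms(1) by (metis finite_Un keys_sqfree_exp)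
    then show "S = S'"
      using \<open>S \<in> Pow \<tau>\<close> \<open>S' \<in> Pow \<tau>\<close> assms(3) by blast
  qed
  have "Poly_Mapping.lookup (pmon \<sigma> \<tau>) m = of_bool (m \<in> (\<lambda>S. sqfree_exp (\<sigma> \<union> S)) ` Pow \<tau>)"
    for m
  proof -
    have "Poly_Mapping.lookup (pmon \<sigma> \<tau>) m = (\<Sum>S\<in>Pow \<tau>. of_bool (sqfree_exp (\<sigma> \<union> S) = m))"
      unfolding pmon_expand[OF assms]
      by (simp add: lookup_sum sqfree_mon_def lookup_single when_def of_bool_def)
    also have "\<dots> = (\<Sum>e\<in>(\<lambda>S. sqfree_exp (\<sigma> \<union> S)) ` Pow \<tau>. of_bool (e = m))"
      by (simp add: sum.reindex[OF inj])
    also have "\<dots> = of_bool (m \<in> (\<lambda>S. sqfree_exp (\<sigma> \<union> S)) ` Pow \<tau>)"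
      using assms(2) by (simp add: of_bool_def)
    finally show ?thesis .
  qed
  then show ?thesis
    by (auto simp: in_keys_iff)
qed

lemma total_degree_pmon:
  assumes "valid_pair n \<sigma> \<tau>"
  shows "total_degree (pmon \<sigma> \<tau>) = card \<sigma> + card \<tau>"
proof -
  have fin: "finite \<sigma>" "finite \<tau>" and disj: "\<sigma> \<inter> \<tau> = {}"
    using assms valid_pair_finite unfolding valid_pair_def by auto
  let ?deg = "\<lambda>m::nat \<Rightarrow>\<^sub>0 nat. sum (Poly_Mapping.lookup m) (Poly_Mapping.keys m)"
  have "?deg (sqfree_exp (\<sigma> \<union> S)) = card \<sigma> + card S" if "S \<subseteq> \<tau>" for S
  proof -
    have "finite S" "\<sigma> \<inter> S = {}"
      using that fin(2) disj by (auto intro: finite_subset)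
    then show ?thesis
      using fin(1) by (simp add: degree_sqfree_exp card_Un_disjoint)
  qed
  then have "?deg ` Poly_Mapping.keys (pmon \<sigma> \<tau>) = (\<lambda>S. card \<sigma> + card S) ` Pow \<tau>"
    unfolding keys_pmon[OF fin disj] image_image by (intro image_cong) auto
  moreover have "Max (insert 0 ((\<lambda>S. card \<sigma> + card S) ` Pow \<tau>)) = card \<sigma> + card \<tau>"
    using fin by (intro Max_eqI) (auto intro: card_mono)
  ultimately show ?thesis
    unfolding total_degree_def by simp
qed


section \<open>Pseudo-monomials in a neural ideal\<close>

lemma neural_ideal_vanishes:
  assumes "p \<in> neural_ideal n C" "v \<in> C" "C \<subseteq> words n"
  shows "eval p v = 0"
proof -
  let ?G = "rho ` (words n - C)"
  obtain h where p: "p = (\<Sum>g\<in>?G. h g * g)"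
    using assms(1) unfolding neural_ideal_def ideal_gen_def by blast
  have "eval g v = 0" if "g \<in> ?G" for g
    using that assms(2,3) eval_rho_other[of _ n v] by auto
  then show ?thesis
    unfolding p using words_finite by (simp add: eval_sum eval_mult)
qed

lemma ideal_gen_add:
  assumes "p \<in> ideal_gen n G" "q \<in> ideal_gen n G"
  shows "p + q \<in> ideal_gen n G"
proof -
  obtain h1 h2 where "\<forall>g\<in>G. in_ring n (h1 g)" "p = (\<Sum>g\<in>G. h1 g * g)"
    "\<forall>g\<in>G. in_ring n (h2 g)" "q = (\<Sum>g\<in>G. h2 g * g)"
    using assms unfolding ideal_gen_def by blast
  then show ?thesis
    unfolding ideal_gen_def
    by (auto simp: distrib_right sum.distrib intro!: exI[of _ "\<lambda>g. h1 g + h2 g"] in_ring_add)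
qed

lemma ideal_gen_generator: "finite G \<Longrightarrow> g \<in> G \<Longrightarrow> g \<in> ideal_gen n G"
  unfolding ideal_gen_def by (auto intro!: exI[of _ "\<lambda>g'. of_bool (g' = g)"])

lemma pmon_split:
  assumes "finite \<sigma>" "finite \<tau>" "k \<notin> \<sigma>" "k \<notin> \<tau>"
  shows "pmon \<sigma> \<tau> = pmon (insert k \<sigma>) \<tau> + pmon \<sigma> (insert k \<tau>)"
proof -
  have "pmon (insert k \<sigma>) \<tau> + pmon \<sigma> (insert k \<tau>) = (Var k + (1 - Var k)) * pmon \<sigma> \<tau>"
    using assms by (simp add: pmon_def algebra_simps)
  then show ?thesis
    by simp
qed

text \<open>
  Splitting on the free coordinates writes \<open>x\<^sub>\<sigma>(1 - x)\<^sub>\<tau>\<close> as the sum of the \<open>\<rho>\<^sub>v\<close> over its cube.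
\<close>

lemma pmon_in_neural_ideal:
  assumes "valid_pair n \<sigma> \<tau>" "cube n \<sigma> \<tau> \<inter> C = {}"
  shows "pmon \<sigma> \<tau> \<in> neural_ideal n C"
  using assms
proof (induction "card ({..<n} - \<sigma> - \<tau>)" arbitrary: \<sigma> \<tau> rule: less_induct)
  case less
  show ?case
  proof (cases "{..<n} - \<sigma> - \<tau> = {}")
    case True
    obtain w where w: "w \<in> words n" "\<forall>i<n. w ! i = (i \<in> \<sigma>)"
      using word_exists[of n "\<lambda>i. i \<in> \<sigma>"] by blast
    have "{i. i < length w \<and> w ! i} = \<sigma>" "{j. j < length w \<and> \<not> w ! j} = \<tau>"
      using less.prems(1) True w unfolding valid_pair_def words_def by auto
    then have rho_w: "rho w = pmon \<sigma> \<tau>"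
      by (simp add: rho_eq_pmon)
    have "w \<in> cube n \<sigma> \<tau>"
      using less.prems(1) w unfolding valid_pair_def cube_def by auto
    then have "w \<in> words n - C"
      using less.prems(2) w(1) by blast
    then have "pmon \<sigma> \<tau> \<in> rho ` (words n - C)"
      unfolding rho_w[symmetric] by (rule imageI)
    then show ?thesis
      unfolding neural_ideal_def by (intro ideal_gen_generator) (simp add: words_finite)
  next
    case False
    then obtain k where k: "k < n" "k \<notin> \<sigma>" "k \<notin> \<tau>"
      by blast
    have "pmon (insert k \<sigma>) \<tau> \<in> neural_ideal n C" "pmon \<sigma> (insert k \<tau>) \<in> neural_ideal n C"
      using less.prems k
      by (intro less.hyps psubset_card_mono;
          auto simp: valid_pair_def cube_def)+
    then show ?thesis
      using pmon_split[OF _ _ k(2,3)] valid_pair_finite[OF less.prems(1)]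
      unfolding neural_ideal_def by (metis ideal_gen_add)
  qed
qed

lemma pmon_in_neural_ideal_iff:
  assumes "valid_pair n \<sigma> \<tau>" "C \<subseteq> words n"
  shows "pmon \<sigma> \<tau> \<in> neural_ideal n C \<longleftrightarrow> cube n \<sigma> \<tau> \<inter> C = {}"
proof
  assume in_ideal: "pmon \<sigma> \<tau> \<in> neural_ideal n C"
  show "cube n \<sigma> \<tau> \<inter> C = {}"
  proof (rule ccontr)
    assume "cube n \<sigma> \<tau> \<inter> C \<noteq> {}"
    then obtain v where "v \<in> cube n \<sigma> \<tau>" "v \<in> C"
      by blast
    then show False
      using eval_pmon_word[OF assms(1)] neural_ideal_vanishes[OF in_ideal _ assms(2)] assms(2)
      by fastforce
  qed
qed (rule pmon_in_neural_ideal[OF assms(1)])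

section \<open>Divisibility of pseudo-monomials\<close>

lemma pmon_factor:
  assumes "finite \<sigma>" "finite \<tau>" "\<sigma>' \<subseteq> \<sigma>" "\<tau>' \<subseteq> \<tau>"
  shows "pmon \<sigma> \<tau> = pmon \<sigma>' \<tau>' * pmon (\<sigma> - \<sigma>') (\<tau> - \<tau>')"
  using assms unfolding pmon_def by (simp add: prod.subset_diff mult_ac)

text \<open>A multiple of a pseudo-monomial can only be 1 where the pseudo-monomial is 1.\<close>

lemma pdvd_pmon_iff:
  assumes "valid_pair n \<sigma> \<tau>" "valid_pair n \<sigma>' \<tau>'"
  shows "pdvd n (pmon \<sigma>' \<tau>') (pmon \<sigma> \<tau>) \<longleftrightarrow> \<sigma>' \<subseteq> \<sigma> \<and> \<tau>' \<subseteq> \<tau>"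
proof
  assume "pdvd n (pmon \<sigma>' \<tau>') (pmon \<sigma> \<tau>)"
  then obtain h where h: "pmon \<sigma> \<tau> = pmon \<sigma>' \<tau>' * h"
    unfolding pdvd_def by blast
  have "cube n \<sigma> \<tau> \<subseteq> cube n \<sigma>' \<tau>'"
  proof
    fix v assume v: "v \<in> cube n \<sigma> \<tau>"
    then have w: "v \<in> words n"
      by (simp add: cube_def)
    have "eval (pmon \<sigma>' \<tau>' * h) v = 1"
      using v h eval_pmon_word[OF assms(1) w] by simp
    then have "eval (pmon \<sigma>' \<tau>') v = 1"
      by (cases "eval (pmon \<sigma>' \<tau>') v") (simp_all add: eval_mult)
    then show "v \<in> cube n \<sigma>' \<tau>'"
      using eval_pmon_word[OF assms(2) w] by simp
  qed
  then show "\<sigma>' \<subseteq> \<sigma> \<and> \<tau>' \<subseteq> \<tau>"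
    by (rule cube_subset_imp_subset[OF assms])
next
  assume sub: "\<sigma>' \<subseteq> \<sigma> \<and> \<tau>' \<subseteq> \<tau>"
  have "pmon \<sigma> \<tau> = pmon \<sigma>' \<tau>' * pmon (\<sigma> - \<sigma>') (\<tau> - \<tau>')"
    using sub valid_pair_finite[OF assms(1)] by (intro pmon_factor) auto
  moreover have "in_ring n (pmon (\<sigma> - \<sigma>') (\<tau> - \<tau>'))"
    by (intro in_ring_pmon valid_pair_subset[OF assms(1)] Diff_subset)
  ultimately show "pdvd n (pmon \<sigma>' \<tau>') (pmon \<sigma> \<tau>)"
    unfolding pdvd_def by blast
qed


section \<open>The canonical form\<close>

definition minimal_pair :: "nat \<Rightarrow> bool list set \<Rightarrow> nat set \<Rightarrow> nat set \<Rightarrow> bool" where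
  "minimal_pair n C \<sigma> \<tau> \<longleftrightarrow> valid_pair n \<sigma> \<tau> \<and> cube n \<sigma> \<tau> \<inter> C = {} \<and>
     (\<forall>\<sigma>' \<tau>'. \<sigma>' \<subseteq> \<sigma> \<longrightarrow> \<tau>' \<subseteq> \<tau> \<longrightarrow> cube n \<sigma>' \<tau>' \<inter> C = {} \<longrightarrow> \<sigma>' = \<sigma> \<and> \<tau>' = \<tau>)"

lemma minimal_pairI:
  "valid_pair n \<sigma> \<tau> \<Longrightarrow> cube n \<sigma> \<tau> \<inter> C = {} \<Longrightarrow>
   (\<And>\<sigma>' \<tau>'. \<sigma>' \<subseteq> \<sigma> \<Longrightarrow> \<tau>' \<subseteq> \<tau> \<Longrightarrow> cube n \<sigma>' \<tau>' \<inter> C = {} \<Longrightarrow> \<sigma>' = \<sigma> \<and> \<tau>' = \<tau>) \<Longrightarrow>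
   minimal_pair n C \<sigma> \<tau>"
  unfolding minimal_pair_def by blast

lemma minimal_pairD:
  assumes "minimal_pair n C \<sigma> \<tau>"
  shows "valid_pair n \<sigma> \<tau>" "cube n \<sigma> \<tau> \<inter> C = {}"
    and "\<sigma>' \<subseteq> \<sigma> \<Longrightarrow> \<tau>' \<subseteq> \<tau> \<Longrightarrow> cube n \<sigma>' \<tau>' \<inter> C = {} \<Longrightarrow> \<sigma>' = \<sigma> \<and> \<tau>' = \<tau>"
  using assms unfolding minimal_pair_def by blast+

lemma card_add_less_of_subset:
  assumes "finite \<sigma>" "finite \<tau>" "\<sigma>' \<subseteq> \<sigma>" "\<tau>' \<subseteq> \<tau>" "(\<sigma>', \<tau>') \<noteq> (\<sigma>, \<tau>)"
  shows "card \<sigma>' + card \<tau>' < card \<sigma> + card \<tau>"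
proof -
  have "card \<sigma>' \<le> card \<sigma>" "card \<tau>' \<le> card \<tau>"
    using assms by (simp_all add: card_mono)
  moreover have "card \<sigma>' < card \<sigma> \<or> card \<tau>' < card \<tau>"
    using assms by (auto intro: psubset_card_mono)
  ultimately show ?thesis
    by linarith
qed

lemma smaller_divisor_in_neural_ideal_iff:
  assumes "valid_pair n \<sigma> \<tau>" "C \<subseteq> words n"
  shows "(\<exists>g h. pseudo_monomial n g \<and> g \<in> neural_ideal n C \<and> in_ring n h \<and>
            total_degree g < total_degree (pmon \<sigma> \<tau>) \<and> pmon \<sigma> \<tau> = g * h) \<longleftrightarrow>
         (\<exists>\<sigma>' \<tau>'. \<sigma>' \<subseteq> \<sigma> \<and> \<tau>' \<subseteq> \<tau> \<and> (\<sigma>', \<tau>') \<noteq> (\<sigma>, \<tau>) \<and> cube n \<sigma>' \<tau>' \<inter> C = {})"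
    (is "?divisor \<longleftrightarrow> ?pair")
proof
  assume ?divisor
  then obtain \<sigma>' \<tau>' h where valid': "valid_pair n \<sigma>' \<tau>'" and
    in_ideal: "pmon \<sigma>' \<tau>' \<in> neural_ideal n C" and "in_ring n h" and
    less: "total_degree (pmon \<sigma>' \<tau>') < total_degree (pmon \<sigma> \<tau>)" and
    "pmon \<sigma> \<tau> = pmon \<sigma>' \<tau>' * h"
    unfolding pseudo_monomial_iff_pmon by blast
  then have "\<sigma>' \<subseteq> \<sigma> \<and> \<tau>' \<subseteq> \<tau>"
    using pdvd_pmon_iff[OF assms(1) valid'] unfolding pdvd_def by blast
  then show ?pair
    using less in_ideal pmon_in_neural_ideal_iff[OF valid' assms(2)] by blast
next
  assume ?pair
  then obtain \<sigma>' \<tau>' where sub: "\<sigma>' \<subseteq> \<sigma>" "\<tau>' \<subseteq> \<tau>" and ne: "(\<sigma>', \<tau>') \<noteq> (\<sigma>, \<tau>)" and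
    free: "cube n \<sigma>' \<tau>' \<inter> C = {}"
    by blast
  have valid': "valid_pair n \<sigma>' \<tau>'" and valid_rest: "valid_pair n (\<sigma> - \<sigma>') (\<tau> - \<tau>')"
    using valid_pair_subset[OF assms(1)] sub by auto
  note fin = valid_pair_finite[OF assms(1)]
  have "total_degree (pmon \<sigma>' \<tau>') < total_degree (pmon \<sigma> \<tau>)"
    using card_add_less_of_subset[OF _ _ sub ne] fin
    by (simp add: total_degree_pmon[OF assms(1)] total_degree_pmon[OF valid'])
  then show ?divisor
    using pmon_factor[OF _ _ sub] fin in_ring_pmon[OF valid_rest] free
      pmon_in_neural_ideal_iff[OF valid' assms(2)] pseudo_monomial_iff_pmon valid'
    by blast
qed

lemma CF_neural_ideal_iff:
  assumes "C \<subseteq> words n"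
  shows "f \<in> CF n (neural_ideal n C) \<longleftrightarrow> (\<exists>\<sigma> \<tau>. f = pmon \<sigma> \<tau> \<and> minimal_pair n C \<sigma> \<tau>)"
proof -
  have minimal_iff: "minimal_pm n (neural_ideal n C) (pmon \<sigma> \<tau>) \<longleftrightarrow> minimal_pair n C \<sigma> \<tau>"
    if valid: "valid_pair n \<sigma> \<tau>" for \<sigma> \<tau>
  proof -
    have "pseudo_monomial n (pmon \<sigma> \<tau>)"
      using valid pseudo_monomial_iff_pmon by blast
    then show ?thesis
      using valid unfolding minimal_pm_def minimal_pair_def
        smaller_divisor_in_neural_ideal_iff[OF valid assms] pmon_in_neural_ideal_iff[OF valid assms]
      by auto
  qed
  show ?thesis
  proof
    assume "f \<in> CF n (neural_ideal n C)"
    then have "minimal_pm n (neural_ideal n C) f"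
      by (simp add: CF_def)
    moreover obtain \<sigma> \<tau> where "valid_pair n \<sigma> \<tau>" "f = pmon \<sigma> \<tau>"
      using calculation pseudo_monomial_iff_pmon unfolding minimal_pm_def by blast
    ultimately show "\<exists>\<sigma> \<tau>. f = pmon \<sigma> \<tau> \<and> minimal_pair n C \<sigma> \<tau>"
      using minimal_iff by blast
  next
    assume "\<exists>\<sigma> \<tau>. f = pmon \<sigma> \<tau> \<and> minimal_pair n C \<sigma> \<tau>"
    then obtain \<sigma> \<tau> where "f = pmon \<sigma> \<tau>" "minimal_pair n C \<sigma> \<tau>"
      by blast
    moreover have "valid_pair n \<sigma> \<tau>"
      using calculation(2) unfolding minimal_pair_def by blast
    ultimately show "f \<in> CF n (neural_ideal n C)"
      using minimal_iff by (simp add: CF_def)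
  qed
qed


section \<open>Adding a codeword to a code\<close>

text \<open>The factor \<open>x\<^sub>i - c\<^sub>i\<close> adds \<open>i\<close> to \<open>\<sigma>\<close> if \<open>c\<^sub>i = 0\<close> and to \<open>\<tau>\<close> if \<open>c\<^sub>i = 1\<close>.\<close>

definition add_pos :: "bool list \<Rightarrow> nat \<Rightarrow> nat set \<Rightarrow> nat set" where
  "add_pos c i \<sigma> = (if c ! i then \<sigma> else insert i \<sigma>)"

definition add_neg :: "bool list \<Rightarrow> nat \<Rightarrow> nat set \<Rightarrow> nat set" where
  "add_neg c i \<tau> = (if c ! i then insert i \<tau> else \<tau>)"

lemma notin_cube_add: "c \<notin> cube n (add_pos c i \<sigma>) (add_neg c i \<tau>)"
  by (auto simp: add_pos_def add_neg_def cube_def)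

lemma cube_add_subset: "cube n (add_pos c i \<sigma>) (add_neg c i \<tau>) \<subseteq> cube n \<sigma> \<tau>"
  by (intro cube_antimono) (auto simp: add_pos_def add_neg_def)

lemma valid_pair_add:
  "valid_pair n \<sigma> \<tau> \<Longrightarrow> i < n \<Longrightarrow> i \<notin> \<sigma> \<Longrightarrow> i \<notin> \<tau> \<Longrightarrow>
   valid_pair n (add_pos c i \<sigma>) (add_neg c i \<tau>)"
  unfolding valid_pair_def add_pos_def add_neg_def by auto

lemma subset_of_subset_add_in_cube:
  "\<sigma>' \<subseteq> add_pos c i \<sigma> \<Longrightarrow> \<tau>' \<subseteq> add_neg c i \<tau> \<Longrightarrow> c \<in> cube n \<sigma>' \<tau>' \<Longrightarrow>
   \<sigma>' \<subseteq> \<sigma> \<and> \<tau>' \<subseteq> \<tau>"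
  by (auto simp: add_pos_def add_neg_def cube_def split: if_splits)

lemma add_eq_of_between:
  assumes "\<sigma> \<subseteq> \<sigma>'" "\<tau> \<subseteq> \<tau>'" "\<sigma>' \<subseteq> add_pos c i \<sigma>" "\<tau>' \<subseteq> add_neg c i \<tau>"
    and "c \<in> cube n \<sigma> \<tau>" "c \<notin> cube n \<sigma>' \<tau>'"
  shows "\<sigma>' = add_pos c i \<sigma> \<and> \<tau>' = add_neg c i \<tau>"
  using assms unfolding add_pos_def add_neg_def cube_def
  by (auto split: if_splits)

lemma ex_add_between:
  assumes "valid_pair n \<sigma> \<tau>" "\<sigma>0 \<subseteq> \<sigma>" "\<tau>0 \<subseteq> \<tau>" "c \<in> cube n \<sigma>0 \<tau>0" "c \<notin> cube n \<sigma> \<tau>"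
  shows "\<exists>i<n. i \<notin> \<sigma>0 \<and> i \<notin> \<tau>0 \<and> add_pos c i \<sigma>0 \<subseteq> \<sigma> \<and> add_neg c i \<tau>0 \<subseteq> \<tau>"
proof -
  obtain k where "k \<in> \<sigma> \<and> \<not> c ! k \<or> k \<in> \<tau> \<and> c ! k"
    using assms(4,5) unfolding cube_def by blast
  then have "k < n \<and> k \<notin> \<sigma>0 \<and> k \<notin> \<tau>0 \<and> add_pos c k \<sigma>0 \<subseteq> \<sigma> \<and> add_neg c k \<tau>0 \<subseteq> \<tau>"
    using assms(1-4) unfolding valid_pair_def cube_def add_pos_def add_neg_def by auto
  then show ?thesis
    by blast
qed


lemma minimal_pair_below:
  assumes "valid_pair n \<sigma> \<tau>" "cube n \<sigma> \<tau> \<inter> C = {}"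
  obtains \<sigma>0 \<tau>0 where "\<sigma>0 \<subseteq> \<sigma>" "\<tau>0 \<subseteq> \<tau>" "minimal_pair n C \<sigma>0 \<tau>0"
  using assms
proof (induction "card \<sigma> + card \<tau>" arbitrary: \<sigma> \<tau> rule: less_induct)
  case less
  show ?case
  proof (cases "minimal_pair n C \<sigma> \<tau>")
    case True
    then show ?thesis
      using less.prems(1) by blast
  next
    case False
    then obtain \<sigma>' \<tau>' where sub: "\<sigma>' \<subseteq> \<sigma>" "\<tau>' \<subseteq> \<tau>" and ne: "(\<sigma>', \<tau>') \<noteq> (\<sigma>, \<tau>)"
      and free: "cube n \<sigma>' \<tau>' \<inter> C = {}"
      using less.prems(2,3) unfolding minimal_pair_def by blast
    have "card \<sigma>' + card \<tau>' < card \<sigma> + card \<tau>"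
      using card_add_less_of_subset[OF _ _ sub ne] valid_pair_finite[OF less.prems(2)] by blast
    then show ?thesis
      using less.hyps[OF _ _ valid_pair_subset[OF less.prems(2) sub] free] less.prems(1) sub
      by (meson order_trans)
  qed
qed

lemma minimal_pair_insert_of_notin_cube:
  "minimal_pair n C \<sigma> \<tau> \<Longrightarrow> c \<notin> cube n \<sigma> \<tau> \<Longrightarrow> minimal_pair n (insert c C) \<sigma> \<tau>"
  unfolding minimal_pair_def by blast

lemma minimal_pair_insert_add:
  assumes min0: "minimal_pair n C \<sigma>0 \<tau>0" and c: "c \<in> cube n \<sigma>0 \<tau>0"
    and i: "i < n" "i \<notin> \<sigma>0" "i \<notin> \<tau>0"
    and no_smaller: "\<And>\<sigma>m \<tau>m. minimal_pair n C \<sigma>m \<tau>m \<Longrightarrow> c \<notin> cube n \<sigma>m \<tau>m \<Longrightarrow>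
      \<sigma>m \<subseteq> add_pos c i \<sigma>0 \<Longrightarrow> \<tau>m \<subseteq> add_neg c i \<tau>0 \<Longrightarrow> False"
  shows "minimal_pair n (insert c C) (add_pos c i \<sigma>0) (add_neg c i \<tau>0)"
proof (rule minimal_pairI)
  note valid0 = minimal_pairD(1)[OF min0] and free0 = minimal_pairD(2)[OF min0]
  show "valid_pair n (add_pos c i \<sigma>0) (add_neg c i \<tau>0)"
    using valid_pair_add[OF valid0 i] .
  show "cube n (add_pos c i \<sigma>0) (add_neg c i \<tau>0) \<inter> insert c C = {}"
    using free0 cube_add_subset notin_cube_add by blast
  fix \<sigma>' \<tau>' assume sub': "\<sigma>' \<subseteq> add_pos c i \<sigma>0" "\<tau>' \<subseteq> add_neg c i \<tau>0"
    and free': "cube n \<sigma>' \<tau>' \<inter> insert c C = {}"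
  obtain \<sigma>m \<tau>m where subm: "\<sigma>m \<subseteq> \<sigma>'" "\<tau>m \<subseteq> \<tau>'" and minm: "minimal_pair n C \<sigma>m \<tau>m"
    using minimal_pair_below[of n \<sigma>' \<tau>' C] free'
      valid_pair_subset[OF valid_pair_add[OF valid0 i] sub'] by blast
  have "c \<in> cube n \<sigma>m \<tau>m"
    using no_smaller[OF minm] subm sub' by blast
  then have "\<sigma>m \<subseteq> \<sigma>0 \<and> \<tau>m \<subseteq> \<tau>0"
    using subset_of_subset_add_in_cube subm sub' by (meson order_trans)
  then have "\<sigma>m = \<sigma>0 \<and> \<tau>m = \<tau>0"
    using minimal_pairD(3)[OF min0] minimal_pairD(2)[OF minm] by blast
  then show "\<sigma>' = add_pos c i \<sigma>0 \<and> \<tau>' = add_neg c i \<tau>0"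
    using add_eq_of_between[OF _ _ sub' c] subm free' by blast
qed

lemma minimal_pair_insert_cases:
  assumes min: "minimal_pair n (insert c C) \<sigma> \<tau>"
  obtains "minimal_pair n C \<sigma> \<tau>" "c \<notin> cube n \<sigma> \<tau>"
  | \<sigma>0 \<tau>0 i where "minimal_pair n C \<sigma>0 \<tau>0" "c \<in> cube n \<sigma>0 \<tau>0" "i < n" "i \<notin> \<sigma>0" "i \<notin> \<tau>0"
      "\<sigma> = add_pos c i \<sigma>0" "\<tau> = add_neg c i \<tau>0"
      "\<And>\<sigma>m \<tau>m. minimal_pair n C \<sigma>m \<tau>m \<Longrightarrow> c \<notin> cube n \<sigma>m \<tau>m \<Longrightarrow> \<sigma>m \<subseteq> \<sigma> \<Longrightarrow> \<tau>m \<subseteq> \<tau> \<Longrightarrow> False"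
proof -
  have valid: "valid_pair n \<sigma> \<tau>" and free: "cube n \<sigma> \<tau> \<inter> C = {}" and c: "c \<notin> cube n \<sigma> \<tau>"
    using minimal_pairD(1,2)[OF min] by auto
  have below_min: "\<sigma>' = \<sigma> \<and> \<tau>' = \<tau>"
    if "\<sigma>' \<subseteq> \<sigma>" "\<tau>' \<subseteq> \<tau>" "cube n \<sigma>' \<tau>' \<inter> C = {}" "c \<notin> cube n \<sigma>' \<tau>'" for \<sigma>' \<tau>'
    using minimal_pairD(3)[OF min] that by blast
  show ?thesis
  proof (cases "minimal_pair n C \<sigma> \<tau>")
    case True
    then show ?thesis
      using that(1) c by blast
  next
    case False
    obtain \<sigma>0 \<tau>0 where sub0: "\<sigma>0 \<subseteq> \<sigma>" "\<tau>0 \<subseteq> \<tau>" and min0: "minimal_pair n C \<sigma>0 \<tau>0"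
      using minimal_pair_below[OF valid free] by blast
    note free0 = minimal_pairD(2)[OF min0]
    have c0: "c \<in> cube n \<sigma>0 \<tau>0"
      using below_min[OF sub0 free0] min0 False by blast
    obtain i where i: "i < n" "i \<notin> \<sigma>0" "i \<notin> \<tau>0"
      and sub_add: "add_pos c i \<sigma>0 \<subseteq> \<sigma>" "add_neg c i \<tau>0 \<subseteq> \<tau>"
      using ex_add_between[OF valid sub0 c0 c] by blast
    have "add_pos c i \<sigma>0 = \<sigma> \<and> add_neg c i \<tau>0 = \<tau>"
      using below_min[OF sub_add] free0 cube_add_subset notin_cube_add by blast
    moreover have "False" if "minimal_pair n C \<sigma>m \<tau>m" "c \<notin> cube n \<sigma>m \<tau>m" "\<sigma>m \<subseteq> \<sigma>" "\<tau>m \<subseteq> \<tau>"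
      for \<sigma>m \<tau>m
      using below_min[OF that(3,4) minimal_pairD(2)[OF that(1)] that(2)] that(1) False by blast
    ultimately show ?thesis
      using that(2)[OF min0 c0 i] by metis
  qed
qed

lemma lin_eq_pmon: "lin i b = (if b then pmon {} {i} else pmon {i} {})"
  by (simp add: lin_def pmon_def poly_diff_eq_add add.commute)

lemma lin_minus_one_eq_pmon: "lin i b - 1 = (if b then pmon {i} {} else pmon {} {i})"
  by (simp add: lin_def pmon_def poly_diff_eq_add add.commute add.assoc)

lemma pmon_mult_lin:
  assumes "finite \<sigma>" "finite \<tau>" "i \<notin> \<sigma>" "i \<notin> \<tau>"
  shows "pmon \<sigma> \<tau> * lin i (c ! i) = pmon (add_pos c i \<sigma>) (add_neg c i \<tau>)"
  using assms by (simp add: lin_eq_pmon pmon_def add_pos_def add_neg_def mult_ac)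

lemma pdvd_lin_minus_one_iff:
  assumes "valid_pair n \<sigma> \<tau>" "i < n" "c \<in> cube n \<sigma> \<tau>"
  shows "pdvd n (lin i (c ! i) - 1) (pmon \<sigma> \<tau>) \<longleftrightarrow> i \<in> \<sigma> \<or> i \<in> \<tau>"
proof -
  have "valid_pair n {i} {}" "valid_pair n {} {i}"
    using assms(2) by (simp_all add: valid_pair_def)
  then show ?thesis
    using assms(3) unfolding lin_minus_one_eq_pmon
    by (auto simp: pdvd_pmon_iff[OF assms(1)] cube_def)
qed

lemma eval_pmon_minimal_pair:
  assumes "minimal_pair n C \<sigma> \<tau>" "c \<in> words n"
  shows "eval (pmon \<sigma> \<tau>) c = of_bool (c \<in> cube n \<sigma> \<tau>)"
  using eval_pmon_word[OF minimal_pairD(1)[OF assms(1)] assms(2)] .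

lemma vanishing_CF_dvd_pmon_iff:
  assumes "C \<subseteq> words n" "c \<in> words n" "valid_pair n \<sigma> \<tau>"
  shows "(\<exists>m \<in> {f \<in> CF n (neural_ideal n C). eval f c = 0}. pdvd n m (pmon \<sigma> \<tau>)) \<longleftrightarrow>
         (\<exists>\<sigma>m \<tau>m. minimal_pair n C \<sigma>m \<tau>m \<and> c \<notin> cube n \<sigma>m \<tau>m \<and> \<sigma>m \<subseteq> \<sigma> \<and> \<tau>m \<subseteq> \<tau>)"
  using pdvd_pmon_iff[OF assms(3) minimal_pairD(1)] eval_pmon_minimal_pair[OF _ assms(2)]
  unfolding CF_neural_ideal_iff[OF assms(1)] by fastforce


lemma CF_insert_of_vanishing:
  assumes C: "C \<subseteq> words n" and c: "c \<in> words n"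
    and f: "f \<in> CF n (neural_ideal n C)" "eval f c = 0"
  shows "f \<in> CF n (neural_ideal n (insert c C))"
proof -
  obtain \<sigma> \<tau> where f_eq: "f = pmon \<sigma> \<tau>" and min: "minimal_pair n C \<sigma> \<tau>"
    using f(1) CF_neural_ideal_iff[OF C] by blast
  have "c \<notin> cube n \<sigma> \<tau>"
    using f(2) eval_pmon_minimal_pair[OF min c] f_eq by simp
  then show ?thesis
    using minimal_pair_insert_of_notin_cube[OF min] f_eq CF_neural_ideal_iff C c by auto
qed

lemma CF_insert_mult_lin:
  assumes C: "C \<subseteq> words n" and c: "c \<in> words n"
    and f: "f \<in> CF n (neural_ideal n C)" "eval f c \<noteq> 0" and i: "i < n"
    and not_opposite: "\<not> pdvd n (lin i (c ! i) - 1) f"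
    and not_multiple: "\<not> (\<exists>m \<in> {f \<in> CF n (neural_ideal n C). eval f c = 0}. pdvd n m (f * lin i (c ! i)))"
  shows "f * lin i (c ! i) \<in> CF n (neural_ideal n (insert c C))"
proof -
  obtain \<sigma> \<tau> where f_eq: "f = pmon \<sigma> \<tau>" and min: "minimal_pair n C \<sigma> \<tau>"
    using f(1) CF_neural_ideal_iff[OF C] by blast
  note valid = minimal_pairD(1)[OF min]
  have c_in: "c \<in> cube n \<sigma> \<tau>"
    using f(2) eval_pmon_minimal_pair[OF min c] f_eq by simp
  have i_new: "i \<notin> \<sigma>" "i \<notin> \<tau>"
    using not_opposite pdvd_lin_minus_one_iff[OF valid i c_in] f_eq by auto
  have g: "f * lin i (c ! i) = pmon (add_pos c i \<sigma>) (add_neg c i \<tau>)"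
    using pmon_mult_lin valid_pair_finite[OF valid] i_new f_eq by simp
  have "minimal_pair n (insert c C) (add_pos c i \<sigma>) (add_neg c i \<tau>)"
  proof (rule minimal_pair_insert_add[OF min c_in i i_new])
    fix \<sigma>m \<tau>m
    assume "minimal_pair n C \<sigma>m \<tau>m" "c \<notin> cube n \<sigma>m \<tau>m"
      "\<sigma>m \<subseteq> add_pos c i \<sigma>" "\<tau>m \<subseteq> add_neg c i \<tau>"
    then show False
      using not_multiple[unfolded g] vanishing_CF_dvd_pmon_iff[OF C c valid_pair_add[OF valid i i_new]]
      by blast
  qed
  then show ?thesis
    using g CF_neural_ideal_iff C c by auto
qed

lemma CF_insert_cases:
  assumes C: "C \<subseteq> words n" and c: "c \<in> words n"
    and g: "g \<in> CF n (neural_ideal n (insert c C))"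
  shows "g \<in> CF n (neural_ideal n C) \<and> eval g c = 0 \<or>
    (\<exists>f \<in> CF n (neural_ideal n C). eval f c \<noteq> 0 \<and>
      (\<exists>i < n. g = f * lin i (c ! i) \<and> \<not> pdvd n (lin i (c ! i) - 1) f \<and>
        \<not> (\<exists>m \<in> {f \<in> CF n (neural_ideal n C). eval f c = 0}. pdvd n m g)))"
proof -
  obtain \<sigma> \<tau> where g_eq: "g = pmon \<sigma> \<tau>" and min: "minimal_pair n (insert c C) \<sigma> \<tau>"
    using g CF_neural_ideal_iff[of "insert c C"] C c by auto
  from min show ?thesis
  proof (cases rule: minimal_pair_insert_cases)
    case 1
    then show ?thesis
      using g_eq eval_pmon_minimal_pair[OF _ c] CF_neural_ideal_iff[OF C] by auto
  next
    case (2 \<sigma>0 \<tau>0 i)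
    note valid0 = minimal_pairD(1)[OF 2(1)]
    have "pmon \<sigma>0 \<tau>0 \<in> CF n (neural_ideal n C)" "eval (pmon \<sigma>0 \<tau>0) c \<noteq> 0"
      using 2(1,2) eval_pmon_minimal_pair[OF 2(1) c] CF_neural_ideal_iff[OF C] by auto
    moreover have "g = pmon \<sigma>0 \<tau>0 * lin i (c ! i)"
      using g_eq 2(4-7) pmon_mult_lin valid_pair_finite[OF valid0] by simp
    moreover have "\<not> pdvd n (lin i (c ! i) - 1) (pmon \<sigma>0 \<tau>0)"
      using pdvd_lin_minus_one_iff[OF valid0 2(3,2)] 2(4,5) by simp
    moreover have "\<not> (\<exists>m \<in> {f \<in> CF n (neural_ideal n C). eval f c = 0}. pdvd n m g)"
      using vanishing_CF_dvd_pmon_iff[OF C c minimal_pairD(1)[OF min]] 2(8) g_eq by blast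
    ultimately show ?thesis
      using 2(3) by blast
  qed
qed

theorem proposition2:
  fixes n :: nat and C' :: "bool list set" and c :: "bool list"
  assumes "C' \<subseteq> words n" and "c \<in> words n"
  shows "CF n (neural_ideal n (C' \<union> {c})) =
    {f \<in> CF n (neural_ideal n C'). eval f c = 0} \<union>
    {g. \<exists>f \<in> CF n (neural_ideal n C') - {f \<in> CF n (neural_ideal n C'). eval f c = 0}.
          \<exists>i < n. g = f * lin i (c ! i) \<and>
            \<not> pdvd n (lin i (c ! i) - 1) f \<and>
            \<not> (\<exists>m \<in> {f \<in> CF n (neural_ideal n C'). eval f c = 0}. pdvd n m g)}"
proof -
  let ?CF = "CF n (neural_ideal n C')"
  let ?M = "{f \<in> ?CF. eval f c = 0}"
  have "g \<in> CF n (neural_ideal n (insert c C')) \<longleftrightarrow>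
    g \<in> ?M \<or> (\<exists>f \<in> ?CF - ?M. \<exists>i < n. g = f * lin i (c ! i) \<and>
      \<not> pdvd n (lin i (c ! i) - 1) f \<and> \<not> (\<exists>m \<in> ?M. pdvd n m g))"
    (is "?lhs \<longleftrightarrow> ?rhs") for g
  proof
    show "?lhs \<Longrightarrow> ?rhs"
      using CF_insert_cases[OF assms] by blast
    show "?rhs \<Longrightarrow> ?lhs"
      using CF_insert_of_vanishing[OF assms] CF_insert_mult_lin[OF assms] by blast
  qed
  then show ?thesis
    by auto
qed

end
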